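(* Let $h,n\geq2$ and let $U\leq G$ be regular. Then: (i) $O(U)$ is regular; (ii) $\mathcal{F}^U=\mathcal{F}^{O(U)}$; (iii) $\bigcap_{F\in\mathcal{F}^U}G(F)=O(U)$.
   Context: Permutations compose as $(\sigma\tau)(x)=\sigma(\tau(x))$. Let $G=S_h\times S_n$ and $\mathcal{P}=(S_n)^h$ (preference profiles), with $G$ acting by $(p^{(\varphi,\psi)})_i=\psi\,p_{\varphi^{-1}(i)}$; for $U\leq G$, $p^U=\{p^g:g\in U\}$. $U\leq G$ is regular if for every $p\in\mathcal{P}$, $\{g\in U:p^g=p\}\subseteq S_h\times\{id\}$. A social preference function is any $F:\mathcal{P}\to S_n$; $\mathcal{F}^U$ is the set of $U$-symmetric ones ($F(p^{(\varphi,\psi)})=\psi F(p)$ for all $p$ and $(\varphi,\psi)\in U$), and $G(F)=\{(\varphi,\psi)\in G: F(p^{(\varphi,\psi)})=\psi F(p)\ \forall p\}$. For regular $U$, let $\mathcal{A}(U)$ be the set of regular subgroups $V\leq G$ with $V\geq U$ and $p^V\subseteq p^U$ for all $p\in\mathcal{P}$, and let the orbit extension $O(U)=\langle\mathcal{A}(U)\rangle$ be the subgroup generated by them. *)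

theory Defs
  imports "HOL-Combinatorics.Permutations"
begin

text \<open>Voters are 0..h-1, alternatives are 0..n-1. Permutations are functions
  nat \<Rightarrow> nat that permute the respective range; composition is function
  composition, so (\<sigma>\<tau>)(x) = \<sigma>(\<tau>(x)).\<close>

definition Grp :: "nat \<Rightarrow> nat \<Rightarrow> ((nat \<Rightarrow> nat) \<times> (nat \<Rightarrow> nat)) set" where
  "Grp h n = {(\<phi>, \<psi>). \<phi> permutes {..<h} \<and> \<psi> permutes {..<n}}"

definition is_subgrp :: "nat \<Rightarrow> nat \<Rightarrow> ((nat \<Rightarrow> nat) \<times> (nat \<Rightarrow> nat)) set \<Rightarrow> bool" where
  "is_subgrp h n U \<longleftrightarrow> U \<subseteq> Grp h n \<and> (id, id) \<in> U
     \<and> (\<forall>\<phi>1 \<psi>1 \<phi>2 \<psi>2. (\<phi>1, \<psi>1) \<in> U \<longrightarrow> (\<phi>2, \<psi>2) \<in> U \<longrightarrow> (\<phi>1 \<circ> \<phi>2, \<psi>1 \<circ> \<psi>2) \<in> U)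
     \<and> (\<forall>\<phi> \<psi>. (\<phi>, \<psi>) \<in> U \<longrightarrow> (inv \<phi>, inv \<psi>) \<in> U)"

definition gen_subgrp :: "nat \<Rightarrow> nat \<Rightarrow> ((nat \<Rightarrow> nat) \<times> (nat \<Rightarrow> nat)) set
    \<Rightarrow> ((nat \<Rightarrow> nat) \<times> (nat \<Rightarrow> nat)) set" where
  "gen_subgrp h n A = \<Inter> {V. is_subgrp h n V \<and> A \<subseteq> V}"

text \<open>Preference profiles (S_n)^h, represented canonically (entries outside the
  voter range are id).\<close>
definition profiles :: "nat \<Rightarrow> nat \<Rightarrow> (nat \<Rightarrow> nat \<Rightarrow> nat) set" where
  "profiles h n = {p. (\<forall>i<h. p i permutes {..<n}) \<and> (\<forall>i. h \<le> i \<longrightarrow> p i = id)}"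

definition act :: "nat \<Rightarrow> (nat \<Rightarrow> nat) \<times> (nat \<Rightarrow> nat) \<Rightarrow> (nat \<Rightarrow> nat \<Rightarrow> nat) \<Rightarrow> (nat \<Rightarrow> nat \<Rightarrow> nat)" where
  "act h g p = (\<lambda>i. if i < h then snd g \<circ> p (inv (fst g) i) else id)"

definition orbit :: "nat \<Rightarrow> ((nat \<Rightarrow> nat) \<times> (nat \<Rightarrow> nat)) set \<Rightarrow> (nat \<Rightarrow> nat \<Rightarrow> nat) \<Rightarrow> (nat \<Rightarrow> nat \<Rightarrow> nat) set" where
  "orbit h U p = (\<lambda>g. act h g p) ` U"

definition regular :: "nat \<Rightarrow> nat \<Rightarrow> ((nat \<Rightarrow> nat) \<times> (nat \<Rightarrow> nat)) set \<Rightarrow> bool" where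
  "regular h n U \<longleftrightarrow> is_subgrp h n U \<and>
     (\<forall>p\<in>profiles h n. \<forall>g\<in>U. act h g p = p \<longrightarrow> snd g = id)"

text \<open>Social preference functions: maps from profiles to S_n (values outside
  the profile set are irrelevant and unconstrained).\<close>
definition SPF :: "nat \<Rightarrow> nat \<Rightarrow> ((nat \<Rightarrow> nat \<Rightarrow> nat) \<Rightarrow> (nat \<Rightarrow> nat)) set" where
  "SPF h n = {F. \<forall>p\<in>profiles h n. F p permutes {..<n}}"

definition symF :: "nat \<Rightarrow> nat \<Rightarrow> ((nat \<Rightarrow> nat) \<times> (nat \<Rightarrow> nat)) set
    \<Rightarrow> ((nat \<Rightarrow> nat \<Rightarrow> nat) \<Rightarrow> (nat \<Rightarrow> nat)) set" where
  "symF h n U = {F \<in> SPF h n. \<forall>p\<in>profiles h n. \<forall>(\<phi>, \<psi>)\<in>U. F (act h (\<phi>, \<psi>) p) = \<psi> \<circ> F p}"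

definition symgrp :: "nat \<Rightarrow> nat \<Rightarrow> ((nat \<Rightarrow> nat \<Rightarrow> nat) \<Rightarrow> (nat \<Rightarrow> nat))
    \<Rightarrow> ((nat \<Rightarrow> nat) \<times> (nat \<Rightarrow> nat)) set" where
  "symgrp h n F = {(\<phi>, \<psi>) \<in> Grp h n. \<forall>p\<in>profiles h n. F (act h (\<phi>, \<psi>) p) = \<psi> \<circ> F p}"

definition A_ext :: "nat \<Rightarrow> nat \<Rightarrow> ((nat \<Rightarrow> nat) \<times> (nat \<Rightarrow> nat)) set
    \<Rightarrow> ((nat \<Rightarrow> nat) \<times> (nat \<Rightarrow> nat)) set set" where
  "A_ext h n U = {V. regular h n V \<and> U \<subseteq> V \<and> (\<forall>p\<in>profiles h n. orbit h V p \<subseteq> orbit h U p)}"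

definition orbit_ext :: "nat \<Rightarrow> nat \<Rightarrow> ((nat \<Rightarrow> nat) \<times> (nat \<Rightarrow> nat)) set
    \<Rightarrow> ((nat \<Rightarrow> nat) \<times> (nat \<Rightarrow> nat)) set" where
  "orbit_ext h n U = gen_subgrp h n (\<Union> (A_ext h n U))"

end

theory Submission imports Defs begin

text \<open>Let \<open>W\<close> consist of those \<open>g \<in> G\<close> that act on every profile \<open>p\<close> like some
  \<open>u \<in> U\<close> with the same permutation of alternatives. \<open>W\<close> is a regular subgroup
  with the same orbits as \<open>U\<close>, and every \<open>V \<in> \<A>(U)\<close> lies in \<open>W\<close>: if \<open>p\<^sup>v = p\<^sup>u\<close>
  with \<open>u, v \<in> V\<close>, regularity of \<open>V\<close> forces \<open>u\<close> and \<open>v\<close> to permute the alternatives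
  alike. Hence \<open>O(U) = W\<close>, and \<open>U\<close>-symmetry implies \<open>W\<close>-symmetry at once.
  Conversely, a \<open>U\<close>-symmetric function may be prescribed arbitrarily on a set of
  orbit representatives. Using a transposition on a single orbit (here \<open>n \<ge> 2\<close>
  is needed) such functions detect any \<open>g\<close> moving a profile out of its
  \<open>U\<close>-orbit, and the function that is the identity on all representatives
  detects a wrong permutation of the alternatives.\<close>

type_synonym grp_elem = "(nat \<Rightarrow> nat) \<times> (nat \<Rightarrow> nat)"
type_synonym profile = "nat \<Rightarrow> nat \<Rightarrow> nat"

definition grp_mult :: "grp_elem \<Rightarrow> grp_elem \<Rightarrow> grp_elem"
  where "grp_mult g1 g2 = (fst g1 \<circ> fst g2, snd g1 \<circ> snd g2)"

definition grp_inv :: "grp_elem \<Rightarrow> grp_elem"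
  where "grp_inv g = (inv (fst g), inv (snd g))"

lemma Grp_iff: "g \<in> Grp h n \<longleftrightarrow> fst g permutes {..<h} \<and> snd g permutes {..<n}"
  by (cases g) (simp add: Grp_def)

lemma grp_mult_in_Grp: "g1 \<in> Grp h n \<Longrightarrow> g2 \<in> Grp h n \<Longrightarrow> grp_mult g1 g2 \<in> Grp h n"
  by (simp add: Grp_iff grp_mult_def permutes_compose)

lemma grp_inv_in_Grp: "g \<in> Grp h n \<Longrightarrow> grp_inv g \<in> Grp h n"
  by (simp add: Grp_iff grp_inv_def permutes_inv)

lemma grp_mult_inv:
  assumes "g \<in> Grp h n"
  shows "grp_mult (grp_inv g) g = (id, id)" and "grp_mult g (grp_inv g) = (id, id)"
proof -
  have "fst g permutes {..<h}" and "snd g permutes {..<n}"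
    using assms by (simp_all add: Grp_iff)
  then show "grp_mult (grp_inv g) g = (id, id)" and "grp_mult g (grp_inv g) = (id, id)"
    by (simp_all add: grp_mult_def grp_inv_def permutes_inv_o)
qed

lemma grp_mult_assoc: "grp_mult (grp_mult a b) c = grp_mult a (grp_mult b c)"
  by (simp add: grp_mult_def o_assoc)

lemma grp_mult_id_right: "grp_mult g (id, id) = g"
  by (simp add: grp_mult_def)

lemma act_act:
  assumes "g1 \<in> Grp h n" and "g2 \<in> Grp h n"
  shows "act h g1 (act h g2 p) = act h (grp_mult g1 g2) p"
proof
  fix i
  have perm1: "fst g1 permutes {..<h}" and perm2: "fst g2 permutes {..<h}"
    using assms by (simp_all add: Grp_iff)
  have "inv (fst g1 \<circ> fst g2) = inv (fst g2) \<circ> inv (fst g1)"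
    using o_inv_distrib permutes_bij perm1 perm2 by blast
  moreover have "i < h \<Longrightarrow> inv (fst g1) i < h"
    using permutes_in_image[OF permutes_inv[OF perm1]] by simp
  ultimately show "act h g1 (act h g2 p) i = act h (grp_mult g1 g2) p i"
    by (auto simp: act_def grp_mult_def)
qed

lemma act_id: "p \<in> profiles h n \<Longrightarrow> act h (id, id) p = p"
  by (auto simp: act_def profiles_def)

lemma act_in_profiles:
  assumes "g \<in> Grp h n" and "p \<in> profiles h n"
  shows "act h g p \<in> profiles h n"
proof -
  have perm1: "fst g permutes {..<h}" and perm2: "snd g permutes {..<n}"
    using assms(1) by (simp_all add: Grp_iff)
  have "i < h \<Longrightarrow> inv (fst g) i < h" for i
    using permutes_in_image[OF permutes_inv[OF perm1]] by simp
  then have "i < h \<Longrightarrow> snd g \<circ> p (inv (fst g) i) permutes {..<n}" for i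
    using assms(2) permutes_compose[OF _ perm2] by (simp add: profiles_def)
  then show ?thesis
    by (simp add: act_def profiles_def)
qed

lemma act_grp_inv:
  assumes "g \<in> Grp h n" and "p \<in> profiles h n"
  shows "act h (grp_inv g) (act h g p) = p" and "act h g (act h (grp_inv g) p) = p"
  using assms act_act grp_inv_in_Grp grp_mult_inv act_id by metis+

lemma permutes_comp_cancel:
  assumes "s permutes S"
  shows "s \<circ> a = s \<circ> b \<longleftrightarrow> a = b" and "a \<circ> s = b \<circ> s \<longleftrightarrow> a = b"
proof -
  have "inv s \<circ> (s \<circ> f) = f" for f :: "'b \<Rightarrow> 'a"
    using permutes_inv_o[OF assms] by (simp add: o_assoc)
  moreover have "f \<circ> s \<circ> inv s = f" for f :: "'a \<Rightarrow> 'b"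
    using permutes_inv_o[OF assms] by (simp add: comp_assoc)
  ultimately show "s \<circ> a = s \<circ> b \<longleftrightarrow> a = b" and "a \<circ> s = b \<circ> s \<longleftrightarrow> a = b"
    by metis+
qed

lemma is_subgrpD:
  assumes "is_subgrp h n U"
  shows "U \<subseteq> Grp h n" and "(id, id) \<in> U"
    and "\<And>u v. u \<in> U \<Longrightarrow> v \<in> U \<Longrightarrow> grp_mult u v \<in> U"
    and "\<And>u. u \<in> U \<Longrightarrow> grp_inv u \<in> U"
  using assms unfolding is_subgrp_def grp_mult_def grp_inv_def by auto

lemma is_subgrpI:
  assumes "U \<subseteq> Grp h n" and "(id, id) \<in> U"
    and "\<And>u v. u \<in> U \<Longrightarrow> v \<in> U \<Longrightarrow> grp_mult u v \<in> U"
    and "\<And>u. u \<in> U \<Longrightarrow> grp_inv u \<in> U"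
  shows "is_subgrp h n U"
  using assms unfolding is_subgrp_def grp_mult_def grp_inv_def by fastforce

lemma subgrp_right_translation:
  assumes U: "is_subgrp h n U" and u: "u \<in> U"
  shows "(\<lambda>g. grp_mult g u) ` U = U"
proof
  show "(\<lambda>g. grp_mult g u) ` U \<subseteq> U"
    using is_subgrpD(3)[OF U _ u] by blast
  have "u \<in> Grp h n"
    using is_subgrpD(1)[OF U] u by blast
  then have "g = grp_mult (grp_mult g (grp_inv u)) u" for g
    by (simp add: grp_mult_assoc grp_mult_inv grp_mult_id_right)
  moreover have "grp_mult g (grp_inv u) \<in> U" if "g \<in> U" for g
    using is_subgrpD(3,4)[OF U] u that by blast
  ultimately show "U \<subseteq> (\<lambda>g. grp_mult g u) ` U"
    by blast
qed

lemma regular_snd_eq: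
  assumes V: "regular h n V" and "u \<in> V" "v \<in> V" and p: "p \<in> profiles h n"
    and same: "act h u p = act h v p"
  shows "snd u = snd v"
proof -
  have V_subgrp: "is_subgrp h n V"
    using V by (simp add: regular_def)
  have uG: "u \<in> Grp h n" and vG: "v \<in> Grp h n"
    using is_subgrpD(1)[OF V_subgrp] assms(2,3) by auto
  have "act h (grp_mult (grp_inv u) v) p = p"
    using act_act[OF grp_inv_in_Grp[OF uG] vG] act_grp_inv(1)[OF uG p] same by metis
  moreover have "grp_mult (grp_inv u) v \<in> V"
    using is_subgrpD[OF V_subgrp] assms(2,3) by blast
  ultimately have "snd (grp_mult (grp_inv u) v) = id"
    using V p unfolding regular_def by blast
  moreover have su: "snd u permutes {..<n}"
    using uG by (simp add: Grp_iff)
  ultimately have "inv (snd u) \<circ> snd v = inv (snd u) \<circ> snd u"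
    by (simp add: grp_mult_def grp_inv_def permutes_inv_o(2))
  then show ?thesis
    by (simp add: permutes_comp_cancel(1)[OF permutes_inv[OF su]])
qed

lemma symF_iff:
  "F \<in> symF h n U \<longleftrightarrow> F \<in> SPF h n \<and> (\<forall>p\<in>profiles h n. \<forall>g\<in>U. F (act h g p) = snd g \<circ> F p)"
  by (simp add: symF_def case_prod_beta)

lemma symgrp_iff:
  "g \<in> symgrp h n F \<longleftrightarrow> g \<in> Grp h n \<and> (\<forall>p\<in>profiles h n. F (act h g p) = snd g \<circ> F p)"
  by (cases g) (auto simp: symgrp_def)

lemma symF_subset_symgrp: "F \<in> symF h n V \<Longrightarrow> V \<subseteq> Grp h n \<Longrightarrow> V \<subseteq> symgrp h n F"
  by (auto simp: symF_iff symgrp_iff)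

lemma orbit_iff: "x \<in> orbit h U p \<longleftrightarrow> (\<exists>u\<in>U. x = act h u p)"
  by (auto simp: orbit_def)

definition orbit_rep :: "nat \<Rightarrow> grp_elem set \<Rightarrow> profile \<Rightarrow> profile"
  where "orbit_rep h U p = (SOME x. x \<in> orbit h U p)"

definition rep_transporter :: "nat \<Rightarrow> grp_elem set \<Rightarrow> profile \<Rightarrow> grp_elem"
  where "rep_transporter h U p = (SOME u. u \<in> U \<and> act h u (orbit_rep h U p) = p)"

definition rep_extension ::
    "nat \<Rightarrow> grp_elem set \<Rightarrow> (profile \<Rightarrow> nat \<Rightarrow> nat) \<Rightarrow> profile \<Rightarrow> nat \<Rightarrow> nat"
  where "rep_extension h U \<tau> p = snd (rep_transporter h U p) \<circ> \<tau> (orbit_rep h U p)"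

text \<open>The group \<open>W\<close> above; it turns out to be \<open>O(U)\<close>.\<close>
definition pointwise_closure :: "nat \<Rightarrow> nat \<Rightarrow> grp_elem set \<Rightarrow> grp_elem set"
  where "pointwise_closure h n U =
    {g \<in> Grp h n. \<forall>p\<in>profiles h n. \<exists>u\<in>U. act h g p = act h u p \<and> snd u = snd g}"

lemma pointwise_closureD:
  assumes "g \<in> pointwise_closure h n U" and "p \<in> profiles h n"
  obtains u where "u \<in> U" and "act h g p = act h u p" and "snd u = snd g"
  using assms unfolding pointwise_closure_def by blast

lemma A_ext_subset_pointwise_closure:
  assumes V: "V \<in> A_ext h n U"
  shows "V \<subseteq> pointwise_closure h n U"
proof
  fix v assume v: "v \<in> V"
  have V_regular: "regular h n V" and "U \<subseteq> V"
    and orbits: "\<And>p. p \<in> profiles h n \<Longrightarrow> orbit h V p \<subseteq> orbit h U p"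
    using V by (auto simp: A_ext_def)
  have "\<exists>u\<in>U. act h v p = act h u p \<and> snd u = snd v" if p: "p \<in> profiles h n" for p
  proof -
    obtain u where "u \<in> U" "act h v p = act h u p"
      using orbits[OF p] v unfolding orbit_def by blast
    then show ?thesis
      using regular_snd_eq[OF V_regular _ v p] \<open>U \<subseteq> V\<close> by (metis subsetD)
  qed
  moreover have "v \<in> Grp h n"
    using V_regular v by (auto simp: regular_def dest: is_subgrpD(1))
  ultimately show "v \<in> pointwise_closure h n U"
    by (simp add: pointwise_closure_def)
qed

locale subgrp =
  fixes h n :: nat and U :: "grp_elem set"
  assumes subgrp: "is_subgrp h n U"
begin

lemma in_Grp: "u \<in> U \<Longrightarrow> u \<in> Grp h n"
  using is_subgrpD(1)[OF subgrp] by blast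

lemma in_own_orbit: "p \<in> profiles h n \<Longrightarrow> p \<in> orbit h U p"
  using act_id is_subgrpD(2)[OF subgrp] orbit_iff by metis

lemma orbit_act:
  assumes p: "p \<in> profiles h n" and u: "u \<in> U"
  shows "orbit h U (act h u p) = orbit h U p"
proof -
  have "orbit h U (act h u p) = (\<lambda>g. act h (grp_mult g u) p) ` U"
    unfolding orbit_def using act_act[OF in_Grp in_Grp[OF u]] by simp
  also have "\<dots> = (\<lambda>g. act h g p) ` (\<lambda>g. grp_mult g u) ` U"
    by (simp add: image_image)
  finally show ?thesis
    by (simp add: subgrp_right_translation[OF subgrp u] orbit_def)
qed

lemma orbit_eq_if_in_orbit: "p \<in> profiles h n \<Longrightarrow> x \<in> orbit h U p \<Longrightarrow> orbit h U x = orbit h U p"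
  using orbit_act by (auto simp: orbit_iff)

lemma orbit_rep_in_orbit: "p \<in> profiles h n \<Longrightarrow> orbit_rep h U p \<in> orbit h U p"
  unfolding orbit_rep_def by (metis in_own_orbit someI)

lemma orbit_rep_in_profiles: "p \<in> profiles h n \<Longrightarrow> orbit_rep h U p \<in> profiles h n"
  using orbit_rep_in_orbit act_in_profiles in_Grp by (metis orbit_iff)

lemma orbit_rep_act: "p \<in> profiles h n \<Longrightarrow> u \<in> U \<Longrightarrow> orbit_rep h U (act h u p) = orbit_rep h U p"
  unfolding orbit_rep_def by (simp add: orbit_act)

lemma rep_transporter:
  assumes p: "p \<in> profiles h n"
  shows "rep_transporter h U p \<in> U" and "act h (rep_transporter h U p) (orbit_rep h U p) = p"
proof -
  obtain v where v: "v \<in> U" "orbit_rep h U p = act h v p"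
    using orbit_rep_in_orbit[OF p] orbit_iff by metis
  then have "grp_inv v \<in> U \<and> act h (grp_inv v) (orbit_rep h U p) = p"
    using act_grp_inv(1)[OF in_Grp p] is_subgrpD(4)[OF subgrp] by simp
  then have "rep_transporter h U p \<in> U \<and> act h (rep_transporter h U p) (orbit_rep h U p) = p"
    unfolding rep_transporter_def by (rule someI)
  then show "rep_transporter h U p \<in> U" and "act h (rep_transporter h U p) (orbit_rep h U p) = p"
    by blast+
qed

lemma U_subset_pointwise_closure: "U \<subseteq> pointwise_closure h n U"
  unfolding pointwise_closure_def using in_Grp by blast

lemma pointwise_closure_mult:
  assumes g1: "g1 \<in> pointwise_closure h n U" and g2: "g2 \<in> pointwise_closure h n U"
  shows "grp_mult g1 g2 \<in> pointwise_closure h n U"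
proof -
  have G1: "g1 \<in> Grp h n" and G2: "g2 \<in> Grp h n"
    using g1 g2 by (simp_all add: pointwise_closure_def)
  have "\<exists>u\<in>U. act h (grp_mult g1 g2) p = act h u p \<and> snd u = snd (grp_mult g1 g2)"
    if p: "p \<in> profiles h n" for p
  proof -
    obtain u2 where u2: "u2 \<in> U" "act h g2 p = act h u2 p" "snd u2 = snd g2"
      using g2 p by (rule pointwise_closureD)
    obtain u1 where u1: "u1 \<in> U" "act h g1 (act h g2 p) = act h u1 (act h g2 p)" "snd u1 = snd g1"
      using g1 act_in_profiles[OF G2 p] by (rule pointwise_closureD)
    have "act h (grp_mult g1 g2) p = act h (grp_mult u1 u2) p"
      using act_act[OF G1 G2] act_act[OF in_Grp[OF u1(1)] in_Grp[OF u2(1)]] u1(2) u2(2) by metis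
    moreover have "snd (grp_mult u1 u2) = snd (grp_mult g1 g2)"
      using u1 u2 by (simp add: grp_mult_def)
    ultimately show ?thesis
      using is_subgrpD(3)[OF subgrp u1(1) u2(1)] by blast
  qed
  then show ?thesis
    using grp_mult_in_Grp[OF G1 G2] by (simp add: pointwise_closure_def)
qed

lemma pointwise_closure_inv:
  assumes g: "g \<in> pointwise_closure h n U"
  shows "grp_inv g \<in> pointwise_closure h n U"
proof -
  have G: "g \<in> Grp h n"
    using g by (simp add: pointwise_closure_def)
  have "\<exists>u\<in>U. act h (grp_inv g) p = act h u p \<and> snd u = snd (grp_inv g)"
    if p: "p \<in> profiles h n" for p
  proof -
    define q where "q = act h (grp_inv g) p"
    obtain u where u: "u \<in> U" "act h g q = act h u q" "snd u = snd g"
      using g act_in_profiles[OF grp_inv_in_Grp[OF G] p] unfolding q_def by (rule pointwise_closureD)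
    have "act h (grp_inv u) p = q"
      using u act_grp_inv act_in_profiles grp_inv_in_Grp G p in_Grp q_def by metis
    moreover have "snd (grp_inv u) = snd (grp_inv g)"
      using u by (simp add: grp_inv_def)
    ultimately show ?thesis
      using is_subgrpD(4)[OF subgrp u(1)] q_def by metis
  qed
  then show ?thesis
    using grp_inv_in_Grp[OF G] by (simp add: pointwise_closure_def)
qed

lemma pointwise_closure_subgrp: "is_subgrp h n (pointwise_closure h n U)"
  using U_subset_pointwise_closure is_subgrpD(2)[OF subgrp]
    pointwise_closure_mult pointwise_closure_inv
  by (intro is_subgrpI) (auto simp: pointwise_closure_def)

lemma symF_pointwise_closure: "symF h n (pointwise_closure h n U) = symF h n U"
proof
  show "symF h n (pointwise_closure h n U) \<subseteq> symF h n U"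
  proof
    fix F assume "F \<in> symF h n (pointwise_closure h n U)"
    then show "F \<in> symF h n U"
      using U_subset_pointwise_closure unfolding symF_iff by (meson subsetD)
  qed
  show "symF h n U \<subseteq> symF h n (pointwise_closure h n U)"
  proof
    fix F assume F: "F \<in> symF h n U"
    have "F (act h g p) = snd g \<circ> F p" if "p \<in> profiles h n" "g \<in> pointwise_closure h n U" for p g
      using that(2,1) by (rule pointwise_closureD) (use F that(1) in \<open>simp add: symF_iff\<close>)
    then show "F \<in> symF h n (pointwise_closure h n U)"
      using F by (simp add: symF_iff)
  qed
qed

end

locale regular_subgrp =
  fixes h n :: nat and U :: "grp_elem set"
  assumes regular: "regular h n U"

sublocale regular_subgrp \<subseteq> subgrp
  using regular by unfold_locales (simp add: regular_def)

context regular_subgrp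
begin

lemma rep_extension_in_symF:
  assumes \<tau>: "\<And>x. \<tau> x permutes {..<n}"
  shows "rep_extension h U \<tau> \<in> symF h n U"
  unfolding symF_iff
proof (intro conjI ballI)
  show "rep_extension h U \<tau> \<in> SPF h n"
    using rep_transporter(1) in_Grp permutes_compose[OF \<tau>]
    by (auto simp: SPF_def rep_extension_def Grp_iff)
  fix p g assume p: "p \<in> profiles h n" and g: "g \<in> U"
  define q where "q = act h g p"
  define r where "r = orbit_rep h U p"
  have q: "q \<in> profiles h n" and qr: "orbit_rep h U q = r"
    using act_in_profiles[OF in_Grp[OF g] p] orbit_rep_act[OF p g] by (simp_all add: q_def r_def)
  have "act h (rep_transporter h U q) r = act h (grp_mult g (rep_transporter h U p)) r"
    using rep_transporter[OF q] rep_transporter[OF p] act_act[OF in_Grp[OF g] in_Grp] qr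
    by (metis q_def r_def)
  then have "snd (rep_transporter h U q) = snd g \<circ> snd (rep_transporter h U p)"
    using regular_snd_eq[OF regular rep_transporter(1)[OF q]
        is_subgrpD(3)[OF subgrp g rep_transporter(1)[OF p]] orbit_rep_in_profiles[OF p]]
    by (simp add: r_def grp_mult_def)
  then show "rep_extension h U \<tau> (act h g p) = snd g \<circ> rep_extension h U \<tau> p"
    by (simp add: rep_extension_def q_def[symmetric] qr r_def o_assoc)
qed

lemma symF_separates_orbits:
  assumes n: "n \<ge> 2" and p: "p \<in> profiles h n" and q: "q \<in> profiles h n"
    and not_in_orbit: "q \<notin> orbit h U p"
  obtains F F' where "F \<in> symF h n U" and "F' \<in> symF h n U" and "F p = F' p" and "F q \<noteq> F' q"
proof
  define t :: "nat \<Rightarrow> nat" where "t = Transposition.transpose 0 1"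
  define \<tau> where "\<tau> x = (if x = orbit_rep h U q then t else id)" for x
  have "t permutes {..<n}"
    using n by (auto simp: t_def intro: permutes_swap_id)
  then show "rep_extension h U \<tau> \<in> symF h n U" and "rep_extension h U (\<lambda>_. id) \<in> symF h n U"
    by (simp_all add: rep_extension_in_symF \<tau>_def)
  have "orbit_rep h U p \<noteq> orbit_rep h U q"
    using orbit_rep_in_orbit orbit_eq_if_in_orbit in_own_orbit p q not_in_orbit by metis
  then show "rep_extension h U \<tau> p = rep_extension h U (\<lambda>_. id) p"
    by (simp add: rep_extension_def \<tau>_def)
  have "t \<noteq> id"
    by (metis id_apply t_def transpose_apply_first zero_neq_one)
  then show "rep_extension h U \<tau> q \<noteq> rep_extension h U (\<lambda>_. id) q"
    using permutes_comp_cancel(1) rep_transporter(1)[OF q] in_Grp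
    by (fastforce simp: rep_extension_def \<tau>_def Grp_iff)
qed

lemma pointwise_closure_regular: "regular h n (pointwise_closure h n U)"
proof -
  have "snd g = id"
    if "p \<in> profiles h n" "g \<in> pointwise_closure h n U" "act h g p = p" for p g
    using that regular by (metis pointwise_closureD regular_def)
  then show ?thesis
    by (simp add: regular_def pointwise_closure_subgrp)
qed

lemma pointwise_closure_in_A_ext: "pointwise_closure h n U \<in> A_ext h n U"
  using pointwise_closure_regular U_subset_pointwise_closure
  by (force simp: A_ext_def orbit_def pointwise_closure_def)

lemma orbit_ext_eq_pointwise_closure: "orbit_ext h n U = pointwise_closure h n U"
proof
  show "orbit_ext h n U \<subseteq> pointwise_closure h n U"
    unfolding orbit_ext_def gen_subgrp_def
    using pointwise_closure_subgrp A_ext_subset_pointwise_closure by blast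
  show "pointwise_closure h n U \<subseteq> orbit_ext h n U"
    using pointwise_closure_in_A_ext by (auto simp: orbit_ext_def gen_subgrp_def)
qed

lemma Inter_symgrp_act_in_orbit:
  assumes n: "n \<ge> 2" and g: "g \<in> (\<Inter>F\<in>symF h n U. symgrp h n F)"
    and p: "p \<in> profiles h n"
  shows "act h g p \<in> orbit h U p"
proof (rule ccontr)
  have "g \<in> Grp h n"
    using g rep_extension_in_symF[of "\<lambda>_. id"] by (auto simp: symgrp_iff)
  moreover assume "act h g p \<notin> orbit h U p"
  ultimately obtain F F' where "F \<in> symF h n U" "F' \<in> symF h n U"
    and "F p = F' p" and "F (act h g p) \<noteq> F' (act h g p)"
    using symF_separates_orbits[OF n p act_in_profiles[OF _ p]] by blast
  then show False
    using g p by (auto simp: symgrp_iff)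
qed

lemma Inter_symgrp_eq_pointwise_closure:
  assumes n: "n \<ge> 2"
  shows "(\<Inter>F\<in>symF h n U. symgrp h n F) = pointwise_closure h n U"
proof
  show "pointwise_closure h n U \<subseteq> (\<Inter>F\<in>symF h n U. symgrp h n F)"
    using symF_subset_symgrp pointwise_closure_subgrp is_subgrpD(1) symF_pointwise_closure
    by (metis INT_greatest)
next
  show "(\<Inter>F\<in>symF h n U. symgrp h n F) \<subseteq> pointwise_closure h n U"
  proof
    fix g assume g: "g \<in> (\<Inter>F\<in>symF h n U. symgrp h n F)"
    define F where "F = rep_extension h U (\<lambda>_. id)"
    have F: "F \<in> symF h n U"
      unfolding F_def by (simp add: rep_extension_in_symF)
    then have G: "g \<in> Grp h n"
      and equivariant: "\<And>p. p \<in> profiles h n \<Longrightarrow> F (act h g p) = snd g \<circ> F p"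
      using g by (auto simp: symgrp_iff)
    have "\<exists>u\<in>U. act h g p = act h u p \<and> snd u = snd g" if p: "p \<in> profiles h n" for p
    proof -
      obtain u where u: "u \<in> U" "act h g p = act h u p"
        using Inter_symgrp_act_in_orbit[OF n g p] by (auto simp: orbit_iff)
      then have "snd u \<circ> F p = snd g \<circ> F p" and "F p permutes {..<n}"
        using F equivariant[OF p] p by (auto simp: symF_iff SPF_def)
      then show ?thesis
        using u permutes_comp_cancel(2) by blast
    qed
    then show "g \<in> pointwise_closure h n U"
      using G by (simp add: pointwise_closure_def)
  qed
qed

end

theorem mainTheorem15:
  fixes h n :: nat and U :: "((nat \<Rightarrow> nat) \<times> (nat \<Rightarrow> nat)) set"
  assumes "h \<ge> 2" and "n \<ge> 2" and "regular h n U"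
  shows "regular h n (orbit_ext h n U)
    \<and> symF h n U = symF h n (orbit_ext h n U)
    \<and> (\<Inter>F\<in>symF h n U. symgrp h n F) = orbit_ext h n U"
proof -
  interpret regular_subgrp h n U
    using assms(3) by unfold_locales
  show ?thesis
    using orbit_ext_eq_pointwise_closure pointwise_closure_regular symF_pointwise_closure
      Inter_symgrp_eq_pointwise_closure[OF assms(2)]
    by simp
qed

end
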